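(* Let $\{w_t\}_{t=0}^T$ be generated by the CLion optimizer (defined in the context) for $T$ iterations, and let $\hat G=\max(G,\sqrt d)$. If $\|w_0\|\le\eta\hat G$ and $\lambda\le\frac{1}{2\eta\hat G T^\alpha}$ with $\alpha>1$, then for all $t$, $$\|w_t\|\le(t+1)\eta\hat G,\qquad \|w_t-w_{t-1}\|\le2\eta\hat G.$$
   Context: CLion optimizer with $\eta>0$, $\beta_1,\beta_2\in(0,1)$, $\lambda>0$, $\nu>0$: initialize $w_0\in\mathbb{R}^d$, $m_0=0$; for $t=1,\dots,T$: draw $\xi_t\sim\mathcal{D}$, $g_t=\nabla f(w_{t-1};\xi_t)$, $c_t=\beta_1m_{t-1}+(1-\beta_1)g_t$; with $S_t=\{j:(c_t)_j\ne0\}$, if $\min_{j\in S_t}|(c_t)_j|\ge\nu$ then $w_t=w_{t-1}-\eta(\mathrm{sign}(c_t)+\lambda w_{t-1})$, else $w_t=w_{t-1}-\eta(c_t+\lambda w_{t-1})$; $m_t=\beta_2m_{t-1}+(1-\beta_2)g_t$. Here $\mathrm{sign}$ is coordinatewise with $\mathrm{sign}(0)=0$. $G$ is the constant of the standing assumption that each $f(\cdot;\xi)$ is $G$-Lipschitz: $|f(w_1;\xi)-f(w_2;\xi)|\le G\|w_1-w_2\|$ for all $w_1,w_2,\xi$ (so $\|\nabla f(w;\xi)\|\le G$). $\|\cdot\|$ is the Euclidean norm. *)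

theory Defs
  imports "HOL-Analysis.Analysis"
begin

definition sign_vec :: "real^'d \<Rightarrow> real^'d" where
  "sign_vec c = (\<chi> j. sgn (c $ j))"

definition clion_dir :: "real \<Rightarrow> real^'d \<Rightarrow> real^'d" where
  "clion_dir \<nu> c = (if (\<forall>j. c $ j \<noteq> 0 \<longrightarrow> \<nu> \<le> \<bar>c $ j\<bar>) then sign_vec c else c)"

text \<open>State (w_t, m_t) of CLion.  gr t w is the stochastic gradient used at
  iteration t, evaluated at w, i.e. gr t w = grad f(w; xi_t).\<close>
primrec clion_state ::
  "real \<Rightarrow> real \<Rightarrow> real \<Rightarrow> real \<Rightarrow> real \<Rightarrow> (nat \<Rightarrow> real^'d \<Rightarrow> real^'d) \<Rightarrow> real^'d
   \<Rightarrow> nat \<Rightarrow> (real^'d) \<times> (real^'d)" where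
  "clion_state \<eta> \<beta>1 \<beta>2 lam \<nu> gr w0 0 = (w0, 0)"
| "clion_state \<eta> \<beta>1 \<beta>2 lam \<nu> gr w0 (Suc t) =
     (let (w, m) = clion_state \<eta> \<beta>1 \<beta>2 lam \<nu> gr w0 t;
          g = gr (Suc t) w;
          c = \<beta>1 *\<^sub>R m + (1 - \<beta>1) *\<^sub>R g
      in (w - \<eta> *\<^sub>R (clion_dir \<nu> c + lam *\<^sub>R w),
          \<beta>2 *\<^sub>R m + (1 - \<beta>2) *\<^sub>R g))"

definition clion_w ::
  "real \<Rightarrow> real \<Rightarrow> real \<Rightarrow> real \<Rightarrow> real \<Rightarrow> (nat \<Rightarrow> real^'d \<Rightarrow> real^'d) \<Rightarrow> real^'d
   \<Rightarrow> nat \<Rightarrow> real^'d" where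
  "clion_w \<eta> \<beta>1 \<beta>2 lam \<nu> gr w0 t = fst (clion_state \<eta> \<beta>1 \<beta>2 lam \<nu> gr w0 t)"

end

theory Submission
  imports Defs
begin

text \<open>Gradients of a G-Lipschitz function have norm at most G, hence so do the momentum and
  the interpolation c, which are convex combinations of gradients, and the update direction
  (sign c or c) has norm at most \<open>H = max G (sqrt d)\<close>. The iteration is the weight-decay recursion
  \<open>w' = (1 - \<eta> lam) w - \<eta> dir\<close>, so while \<open>\<eta> lam \<le> 1\<close> every step adds at most \<open>\<eta> H\<close> to the
  norm. The hypothesis on lam gives \<open>\<eta> lam T \<le> 1\<close>, so the decay term
  \<open>\<eta> lam norm w\<^sub>t \<le> \<eta> lam (t + 1) \<eta> H\<close> is at most \<open>\<eta> H\<close> as well, which bounds every increment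
  by \<open>2 \<eta> H\<close>.\<close>

lemma norm_gradient_le_Lipschitz:
  fixes F :: "'a::euclidean_space \<Rightarrow> real"
  assumes deriv: "(F has_derivative (\<lambda>h. u \<bullet> h)) (at w)"
    and lip: "\<And>x y. \<bar>F x - F y\<bar> \<le> G * norm (x - y)"
  shows "norm u \<le> G"
proof (cases "u = 0")
  case True
  obtain b :: 'a where "b \<in> Basis" using nonempty_Basis by blast
  then have "0 < norm b" by (auto simp: nonzero_Basis)
  moreover have "0 \<le> G * norm b" using lip[of b 0] by (metis abs_ge_zero diff_zero order_trans)
  ultimately have "0 \<le> G" by (simp add: zero_le_mult_iff)
  with True show ?thesis by simp
next
  case False
  define g where "g s = F (w + s *\<^sub>R u)" for s :: real
  have "((\<lambda>s::real. w + s *\<^sub>R u) has_derivative (\<lambda>s. s *\<^sub>R u)) (at 0)"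
    by (auto intro!: derivative_eq_intros)
  moreover have "(F has_derivative (\<lambda>h. u \<bullet> h)) (at (w + 0 *\<^sub>R u))"
    using deriv by simp
  ultimately have "(g has_derivative (\<lambda>s. u \<bullet> (s *\<^sub>R u))) (at 0)"
    unfolding g_def by (rule has_derivative_compose)
  then have "(g has_real_derivative u \<bullet> u) (at 0)"
    by (simp add: has_field_derivative_def mult.commute[of _ "u \<bullet> u"])
  then have "((\<lambda>s. (g s - g 0) / s) \<longlongrightarrow> u \<bullet> u) (at 0)"
    by (simp add: DERIV_def)
  moreover have "\<forall>\<^sub>F s in at 0. (g s - g 0) / s \<le> G * norm u"
  proof (rule eventually_at_filter[THEN iffD2, OF always_eventually], intro allI impI)
    fix s :: real
    assume "s \<noteq> 0"
    have "(g s - g 0) / s \<le> \<bar>g s - g 0\<bar> / \<bar>s\<bar>"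
      by (metis abs_divide abs_ge_self)
    also have "\<dots> \<le> G * norm u"
      using lip[of "w + s *\<^sub>R u" w] \<open>s \<noteq> 0\<close> by (simp add: g_def divide_le_eq mult_ac)
    finally show "(g s - g 0) / s \<le> G * norm u" .
  qed
  ultimately have "u \<bullet> u \<le> G * norm u"
    by (rule tendsto_upperbound) simp
  then show ?thesis
    using False by (simp add: dot_square_norm power2_eq_square)
qed

lemma norm_sign_vec_le: "norm (sign_vec (c::real^'d)) \<le> sqrt (real CARD('d))"
proof -
  have "norm (sign_vec c) \<le> norm (1::real^'d)"
    by (rule norm_le_componentwise_cart) (simp add: sign_vec_def sgn_if)
  also have "norm (1::real^'d) = sqrt (real CARD('d))"
    by (simp add: norm_vec_def L2_set_def)
  finally show ?thesis .
qed

lemma norm_clion_dir_le: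
  fixes c :: "real^'d"
  assumes "norm c \<le> G"
  shows "norm (clion_dir \<nu> c) \<le> max G (sqrt (real CARD('d)))"
  using assms norm_sign_vec_le[of c] unfolding clion_dir_def by auto

lemma norm_convex_combination_le:
  fixes x y :: "'a::real_normed_vector"
  assumes "norm x \<le> G" "norm y \<le> G" "0 \<le> a" "a \<le> 1"
  shows "norm (a *\<^sub>R x + (1 - a) *\<^sub>R y) \<le> G"
  using convexD[OF convex_cball, of x 0 G y a "1 - a"] assms by simp

context
  fixes \<eta> \<beta>1 \<beta>2 lam \<nu> :: real
    and gr :: "nat \<Rightarrow> real^'d \<Rightarrow> real^'d"
    and w0 :: "real^'d"
begin

definition clion_m :: "nat \<Rightarrow> real^'d" where
  "clion_m t = snd (clion_state \<eta> \<beta>1 \<beta>2 lam \<nu> gr w0 t)"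

text \<open>\<open>clion_c t\<close> is the paper's \<open>c\<^sub>t\<^sub>+\<^sub>1\<close>: it combines \<open>m\<^sub>t\<close> with the gradient at \<open>w\<^sub>t\<close>
  and determines \<open>w\<^sub>t\<^sub>+\<^sub>1\<close>.\<close>
definition clion_c :: "nat \<Rightarrow> real^'d" where
  "clion_c t = \<beta>1 *\<^sub>R clion_m t + (1 - \<beta>1) *\<^sub>R gr (Suc t) (clion_w \<eta> \<beta>1 \<beta>2 lam \<nu> gr w0 t)"

lemma clion_w_Suc:
  "clion_w \<eta> \<beta>1 \<beta>2 lam \<nu> gr w0 (Suc t) = clion_w \<eta> \<beta>1 \<beta>2 lam \<nu> gr w0 t
     - \<eta> *\<^sub>R (clion_dir \<nu> (clion_c t) + lam *\<^sub>R clion_w \<eta> \<beta>1 \<beta>2 lam \<nu> gr w0 t)"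
  by (simp add: clion_w_def clion_c_def clion_m_def case_prod_beta Let_def)

lemma clion_m_Suc:
  "clion_m (Suc t) = \<beta>2 *\<^sub>R clion_m t + (1 - \<beta>2) *\<^sub>R gr (Suc t) (clion_w \<eta> \<beta>1 \<beta>2 lam \<nu> gr w0 t)"
  by (simp add: clion_w_def clion_m_def case_prod_beta Let_def)

lemma norm_clion_m_le:
  assumes gr: "\<And>s w. norm (gr s w) \<le> G" and "0 \<le> \<beta>2" "\<beta>2 \<le> 1"
  shows "norm (clion_m t) \<le> G"
proof (induction t)
  case 0
  show ?case using order_trans[OF norm_ge_zero gr] by (simp add: clion_m_def)
next
  case (Suc t)
  then show ?case
    unfolding clion_m_Suc using assms by (blast intro: norm_convex_combination_le)
qed

lemma norm_clion_c_le:
  assumes gr: "\<And>s w. norm (gr s w) \<le> G"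
    and "0 \<le> \<beta>1" "\<beta>1 \<le> 1" "0 \<le> \<beta>2" "\<beta>2 \<le> 1"
  shows "norm (clion_c t) \<le> G"
  unfolding clion_c_def using assms norm_clion_m_le[OF gr]
  by (blast intro: norm_convex_combination_le)

end

lemma weight_decay_iterate_norm_le:
  fixes w d :: "nat \<Rightarrow> 'a::real_normed_vector"
  assumes step: "\<And>t. w (Suc t) = w t - \<eta> *\<^sub>R (d t + lam *\<^sub>R w t)"
    and d: "\<And>t. norm (d t) \<le> H"
    and \<eta>: "0 \<le> \<eta>" and lam: "0 \<le> lam" and horizon: "\<eta> * lam * real T \<le> 1"
    and w0: "norm (w 0) \<le> \<eta> * H"
  shows "t \<le> T \<Longrightarrow> norm (w t) \<le> (real t + 1) * \<eta> * H"
proof (induction t)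
  case 0
  then show ?case using w0 by simp
next
  case (Suc t)
  have "1 \<le> real T" using Suc.prems by simp
  then have "\<eta> * lam * 1 \<le> \<eta> * lam * real T"
    using \<eta> lam by (intro mult_left_mono) auto
  then have decay: "0 \<le> 1 - \<eta> * lam" using horizon by linarith
  have "w (Suc t) = (1 - \<eta> * lam) *\<^sub>R w t - \<eta> *\<^sub>R d t"
    by (simp add: step algebra_simps)
  then have "norm (w (Suc t)) \<le> (1 - \<eta> * lam) * norm (w t) + \<eta> * norm (d t)"
    using decay \<eta> by (metis abs_of_nonneg norm_scaleR norm_triangle_ineq4)
  also have "\<dots> \<le> norm (w t) + \<eta> * H"
    using mult_nonneg_nonneg[OF mult_nonneg_nonneg[OF \<eta> lam] norm_ge_zero[of "w t"]]
      mult_left_mono[OF d[of t] \<eta>]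
    by (simp add: left_diff_distrib)
  also have "\<dots> \<le> (real (Suc t) + 1) * \<eta> * H"
    using Suc by (simp add: algebra_simps)
  finally show ?case .
qed

lemma weight_decay_step_norm_le:
  fixes w d :: "nat \<Rightarrow> 'a::real_normed_vector"
  assumes step: "\<And>t. w (Suc t) = w t - \<eta> *\<^sub>R (d t + lam *\<^sub>R w t)"
    and d: "\<And>t. norm (d t) \<le> H"
    and \<eta>: "0 \<le> \<eta>" and lam: "0 \<le> lam" and horizon: "\<eta> * lam * real T \<le> 1"
    and w0: "norm (w 0) \<le> \<eta> * H"
    and "t < T"
  shows "norm (w (Suc t) - w t) \<le> 2 * \<eta> * H"
proof -
  have "0 \<le> H" using norm_ge_zero d by (rule order_trans)
  then have \<eta>H: "0 \<le> \<eta> * H" using \<eta> by simp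
  have "norm (w t) \<le> (real t + 1) * \<eta> * H"
    using weight_decay_iterate_norm_le[OF assms(1-6), of t] \<open>t < T\<close> by simp
  also have "\<dots> \<le> real T * (\<eta> * H)"
    using mult_right_mono[of "real t + 1" "real T", OF _ \<eta>H] \<open>t < T\<close> by (simp add: mult.assoc)
  finally have "\<eta> * lam * norm (w t) \<le> \<eta> * lam * (real T * (\<eta> * H))"
    using \<eta> lam by (simp add: mult_left_mono)
  also have "\<dots> = (\<eta> * lam * real T) * (\<eta> * H)"
    by (simp only: mult_ac)
  also have "\<dots> \<le> \<eta> * H"
    using mult_right_mono[OF horizon \<eta>H] by simp
  finally have decay: "\<eta> * lam * norm (w t) \<le> \<eta> * H" .
  have "norm (w (Suc t) - w t) = \<eta> * norm (d t + lam *\<^sub>R w t)"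
    using \<eta> by (simp add: step)
  also have "\<dots> \<le> \<eta> * (norm (d t) + lam * norm (w t))"
    using \<eta> lam norm_triangle_ineq[of "d t" "lam *\<^sub>R w t"] by (simp add: mult_left_mono)
  also have "\<dots> \<le> \<eta> * H + \<eta> * H"
    using decay mult_left_mono[OF d[of t] \<eta>] unfolding distrib_left mult.assoc by linarith
  finally show ?thesis by (simp add: mult_ac)
qed

lemma weight_decay_horizon_le:
  assumes "0 < \<eta>" "0 < H" "1 \<le> \<alpha>"
    and lam: "lam \<le> 1 / (2 * \<eta> * H * real T powr \<alpha>)"
  shows "\<eta> * lam * real T \<le> 1 / (2 * H)"
proof (cases "T = 0")
  case False
  then have pos: "0 < real T powr \<alpha>" by simp
  have "\<eta> * lam * real T \<le> \<eta> * (1 / (2 * \<eta> * H * real T powr \<alpha>)) * real T"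
    using lam \<open>0 < \<eta>\<close> by (intro mult_right_mono mult_left_mono) auto
  also have "\<dots> = real T / (2 * H * real T powr \<alpha>)"
    using \<open>0 < \<eta>\<close> by simp
  also have "\<dots> \<le> real T powr \<alpha> / (2 * H * real T powr \<alpha>)"
    using powr_mono[OF \<open>1 \<le> \<alpha>\<close>, of "real T"] False pos \<open>0 < H\<close>
    by (intro divide_right_mono) auto
  also have "\<dots> = 1 / (2 * H)"
    using pos by simp
  finally show ?thesis .
qed (use assms in simp)

theorem lemma3:
  fixes f :: "'x \<Rightarrow> real^'d \<Rightarrow> real"
    and grad :: "'x \<Rightarrow> real^'d \<Rightarrow> real^'d"
    and \<xi> :: "nat \<Rightarrow> 'x"
    and w0 :: "real^'d"
    and \<eta> \<beta>1 \<beta>2 lam \<nu> G \<alpha> :: real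
    and T :: nat
  assumes grad: "\<And>z w. (f z has_derivative (\<lambda>h. grad z w \<bullet> h)) (at w)"
    and lip: "\<And>z w1 w2. \<bar>f z w1 - f z w2\<bar> \<le> G * norm (w1 - w2)"
    and eta: "\<eta> > 0"
    and b1: "0 < \<beta>1" "\<beta>1 < 1"
    and b2: "0 < \<beta>2" "\<beta>2 < 1"
    and lam: "lam > 0"
    and nu: "\<nu> > 0"
    and alpha: "\<alpha> > 1"
    and w0: "norm w0 \<le> \<eta> * max G (sqrt (real CARD('d)))"
    and lam_le: "lam \<le> 1 / (2 * \<eta> * max G (sqrt (real CARD('d))) * real T powr \<alpha>)"
  shows "\<forall>t\<le>T.
           norm (clion_w \<eta> \<beta>1 \<beta>2 lam \<nu> (\<lambda>s w. grad (\<xi> s) w) w0 t)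
             \<le> (real t + 1) * \<eta> * max G (sqrt (real CARD('d)))
         \<and> (1 \<le> t \<longrightarrow>
           norm (clion_w \<eta> \<beta>1 \<beta>2 lam \<nu> (\<lambda>s w. grad (\<xi> s) w) w0 t
                 - clion_w \<eta> \<beta>1 \<beta>2 lam \<nu> (\<lambda>s w. grad (\<xi> s) w) w0 (t - 1))
             \<le> 2 * \<eta> * max G (sqrt (real CARD('d))))"
proof -
  define H where "H = max G (sqrt (real CARD('d)))"
  define gr where "gr = (\<lambda>s w. grad (\<xi> s) w)"
  define W where "W = clion_w \<eta> \<beta>1 \<beta>2 lam \<nu> gr w0"
  have "1 \<le> H" unfolding H_def by (simp add: le_max_iff_disj)
  have dir_le: "\<And>t. norm (clion_dir \<nu> (clion_c \<eta> \<beta>1 \<beta>2 lam \<nu> gr w0 t)) \<le> H"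
    unfolding H_def using norm_gradient_le_Lipschitz[OF grad lip] b1 b2
    by (intro norm_clion_dir_le norm_clion_c_le) (auto simp: gr_def)
  have "\<eta> * lam * real T \<le> 1 / (2 * H)"
    using weight_decay_horizon_le[of \<eta> H \<alpha> lam T] eta alpha lam_le \<open>1 \<le> H\<close> by (simp add: H_def)
  also have "\<dots> \<le> 1" using \<open>1 \<le> H\<close> by simp
  finally have horizon: "\<eta> * lam * real T \<le> 1" .
  have "W 0 = w0" by (simp add: W_def clion_w_def)
  note bounds = clion_w_Suc[of \<eta> \<beta>1 \<beta>2 lam \<nu> gr w0, folded W_def] dir_le
    less_imp_le[OF eta] less_imp_le[OF lam] horizon w0[folded H_def \<open>W 0 = w0\<close>]
  show ?thesis
    unfolding H_def[symmetric] gr_def[symmetric] W_def[symmetric]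
  proof (intro allI impI conjI)
    fix t
    assume "t \<le> T"
    then show "norm (W t) \<le> (real t + 1) * \<eta> * H"
      by (rule weight_decay_iterate_norm_le[OF bounds])
    assume "1 \<le> t"
    then obtain s where t: "t = Suc s" by (cases t) auto
    with \<open>t \<le> T\<close> have "s < T" by simp
    then have "norm (W (Suc s) - W s) \<le> 2 * \<eta> * H"
      by (rule weight_decay_step_norm_le[OF bounds])
    then show "norm (W t - W (t - 1)) \<le> 2 * \<eta> * H" unfolding t by simp
  qed
qed

end
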